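(* In the setting of the context, let $\mu_1,\mu_2$ be two nowhere-equal solutions on an open set $U$ of $$\widehat e_1\cdot\nabla\mu=-C_{31}^{2}-\mu\big(C_{31}^{3}+C_{12}^{2}\big)-\mu^{2}C_{12}^{3},$$ let $\alpha_1,\alpha_2$ be nowhere-vanishing functions on $U$, and let $J_i=\alpha_i(\widehat e_2+\mu_i\widehat e_3)$, $i=1,2$ (these are Poisson vector fields). Then $J_1$ and $J_2$ are compatible, i.e. $J_1+J_2$ is again a Poisson vector field, if and only if $$\widehat e_1\cdot\nabla\ln\left|\frac{\alpha_1}{\alpha_2}\right|=C_{12}^{3}(\mu_1-\mu_2).$$
   Context: Setting: $M$ is an oriented three-dimensional manifold with a Riemannian metric $g$; $\nabla$, $\nabla\times$ and $\times$ denote gradient, curl and cross product. A Poisson vector field is a vector field $J$ with $J\cdot(\nabla\times J)=0$; two Poisson vector fields $J_1,J_2$ are compatible if $J_1+J_2$ is also a Poisson vector field. $v$ is a nowhere vanishing vector field, $\widehat e_1=v/\Vert v\Vert$, extended to a local oriented orthonormal frame $(\widehat e_1,\widehat e_2,\widehat e_3)$ with $\widehat e_3=\widehat e_1\times\widehat e_2$, and structure functions $C_{ij}^k$ defined by $[\widehat e_i,\widehat e_j]=C_{ij}^k\widehat e_k$. *)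

theory Defs
  imports "HOL-Analysis.Analysis" "HOL-Analysis.Cross3"
begin

(* Local (chart) model of the oriented Riemannian 3-manifold:
  points are in an open set of real^3 (an oriented coordinate chart);
  the metric is given by its Gram matrix field G (symmetric positive definite);
  vector fields are maps real^3 <Rightarrow> real^3 (components in coordinate basis). *)

definition riem_metric :: "(real^3 \<Rightarrow> real^3^3) \<Rightarrow> (real^3) set \<Rightarrow> bool" where
  "riem_metric G U \<longleftrightarrow>
     (\<forall>x\<in>U. transpose (G x) = G x \<and> (\<forall>w. w \<noteq> 0 \<longrightarrow> w \<bullet> (G x *v w) > 0)) \<and>
     (\<forall>x\<in>U. G differentiable (at x))"

definition gdot :: "(real^3 \<Rightarrow> real^3^3) \<Rightarrow> real^3 \<Rightarrow> real^3 \<Rightarrow> real^3 \<Rightarrow> real" where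
  "gdot G x u w = u \<bullet> (G x *v w)"

definition gnorm :: "(real^3 \<Rightarrow> real^3^3) \<Rightarrow> real^3 \<Rightarrow> real^3 \<Rightarrow> real" where
  "gnorm G x u = sqrt (gdot G x u u)"

definition pd :: "(real^3 \<Rightarrow> 'b::real_normed_vector) \<Rightarrow> real^3 \<Rightarrow> 3 \<Rightarrow> 'b" where
  "pd f x j = frechet_derivative f (at x) (axis j 1)"

definition grad :: "(real^3 \<Rightarrow> real^3^3) \<Rightarrow> (real^3 \<Rightarrow> real) \<Rightarrow> real^3 \<Rightarrow> real^3" where
  "grad G f x = matrix_inv (G x) *v (\<chi> j. pd f x j)"

definition flat :: "(real^3 \<Rightarrow> real^3^3) \<Rightarrow> (real^3 \<Rightarrow> real^3) \<Rightarrow> real^3 \<Rightarrow> real^3" where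
  "flat G J x = G x *v J x"

definition curl :: "(real^3 \<Rightarrow> real^3^3) \<Rightarrow> (real^3 \<Rightarrow> real^3) \<Rightarrow> real^3 \<Rightarrow> real^3" where
  "curl G J x = (1 / sqrt (det (G x))) *\<^sub>R
     vector [ pd (flat G J) x 2 $ 3 - pd (flat G J) x 3 $ 2,
              pd (flat G J) x 3 $ 1 - pd (flat G J) x 1 $ 3,
              pd (flat G J) x 1 $ 2 - pd (flat G J) x 2 $ 1 ]"

(* Riemannian cross product: (X<times>Y)<flat> = sqrt(det g) [ljk] X^j Y^k *)
definition gcross :: "(real^3 \<Rightarrow> real^3^3) \<Rightarrow> real^3 \<Rightarrow> real^3 \<Rightarrow> real^3 \<Rightarrow> real^3" where
  "gcross G x u w = sqrt (det (G x)) *\<^sub>R (matrix_inv (G x) *v cross3 u w)"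

definition lie :: "(real^3 \<Rightarrow> real^3) \<Rightarrow> (real^3 \<Rightarrow> real^3) \<Rightarrow> real^3 \<Rightarrow> real^3" where
  "lie X Y x = frechet_derivative Y (at x) (X x) - frechet_derivative X (at x) (Y x)"

definition poisson :: "(real^3 \<Rightarrow> real^3^3) \<Rightarrow> (real^3) set \<Rightarrow> (real^3 \<Rightarrow> real^3) \<Rightarrow> bool" where
  "poisson G U J \<longleftrightarrow> (\<forall>x\<in>U. gdot G x (J x) (curl G J x) = 0)"

end

theory Submission
  imports Defs
begin

(* Let \<omega> be the 1-form metrically dual to J = J1 + J2. Then J \<cdot> curl J is the value of
  \<omega> \<and> d\<omega> on the oriented orthonormal frame. As \<omega>(e1) = 0, Cartan's formula
  d\<omega>(X,Y) = X \<omega>(Y) - Y \<omega>(X) - \<omega>([X,Y]) expresses it through the structure functions and the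
  e1-derivatives of \<omega>(e2) = \<alpha>1 + \<alpha>2 and \<omega>(e3) = \<alpha>1 \<mu>1 + \<alpha>2 \<mu>2. Since \<mu>1 and \<mu>2 solve
  the same Riccati equation along e1, the terms quadratic in \<mu> cancel and
  J \<cdot> curl J = (\<mu>2 - \<mu>1) \<alpha>1 \<alpha>2 (e1 ln|\<alpha>1/\<alpha>2| - C_12^3 (\<mu>1 - \<mu>2)),
  which vanishes exactly when its last factor does. *)

lemma linear_axis_expansion:
  fixes L :: "real^'n \<Rightarrow> 'b::real_vector"
  assumes "linear L"
  shows "L v = (\<Sum>i\<in>UNIV. v$i *\<^sub>R L (axis i 1))"
proof -
  have "v = (\<Sum>i\<in>UNIV. v$i *\<^sub>R axis i 1)"
    using basis_expansion[of v] by (simp add: scalar_mult_eq_scaleR)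
  then show ?thesis
    by (metis (no_types, lifting) assms linear_scale linear_sum sum.cong)
qed

lemma linear_real_eq_inner:
  fixes L :: "real^'n \<Rightarrow> real"
  assumes "linear L"
  shows "L v = v \<bullet> (\<chi> j. L (axis j 1))"
  using linear_axis_expansion[OF assms, of v] by (simp add: inner_vec_def)

lemma bounded_bilinear_matrix_vector_mult:
  "bounded_bilinear ((*v) :: real^'n^'m \<Rightarrow> real^'n \<Rightarrow> real^'m)"
  unfolding bilinear_conv_bounded_bilinear[symmetric] bilinear_def
  by (auto intro!: linearI simp: matrix_vector_right_distrib matrix_vector_mult_add_rdistrib
      matrix_vector_mult_scaleR scaleR_matrix_vector_assoc)

lemma symmetric_matrix_inner_commute:
  fixes A :: "real^'n^'n"
  assumes "transpose A = A"
  shows "u \<bullet> (A *v w) = w \<bullet> (A *v u)"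
  by (metis assms dot_lmul_matrix inner_commute vector_transpose_matrix)

lemma posdef_matrix_invertible:
  fixes A :: "real^'n^'n"
  assumes "\<forall>w. w \<noteq> 0 \<longrightarrow> 0 < w \<bullet> (A *v w)"
  shows "invertible A"
proof -
  have "\<forall>w. A *v w = 0 \<longrightarrow> w = 0"
    using assms by (metis inner_zero_right less_irrefl)
  then show ?thesis
    using matrix_left_invertible_ker invertible_left_inverse by blast
qed

lemma matrix_vector_mult_matrix_inv:
  fixes A :: "real^'n^'n"
  assumes "invertible A"
  shows "A *v (matrix_inv A *v w) = w"
proof -
  have "A ** matrix_inv A = mat 1"
    using assms unfolding invertible_def matrix_inv_def by (metis (mono_tags, lifting) someI_ex)
  then show ?thesis
    by (simp add: matrix_vector_mul_assoc)
qed

lemma DERIV_ln_abs: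
  fixes t :: real
  assumes "t \<noteq> 0"
  shows "DERIV (\<lambda>s. ln \<bar>s\<bar>) t :> 1 / t"
proof (cases "t > 0")
  case True
  then show ?thesis
    by (rule has_field_derivative_transform_within_open[OF DERIV_ln_divide, where S="{0<..}"])
      (use True in auto)
next
  case False
  with assms have t: "t < 0" by simp
  have "DERIV (\<lambda>s. ln (- s)) t :> 1/(-t) * (-1)"
    by (rule DERIV_chain2[OF DERIV_ln_divide]) (use t in \<open>auto intro!: derivative_eq_intros\<close>)
  then have "DERIV (\<lambda>s. ln (- s)) t :> 1/t" by simp
  then show ?thesis
    by (rule has_field_derivative_transform_within_open[where S="{..<0}"]) (use t in auto)
qed

lemma has_derivative_ln_abs_divide:
  fixes f g :: "'a::real_normed_vector \<Rightarrow> real"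
  assumes f: "(f has_derivative f') (at x)" and g: "(g has_derivative g') (at x)"
    and "f x \<noteq> 0" "g x \<noteq> 0"
  shows "((\<lambda>y. ln \<bar>f y / g y\<bar>) has_derivative (\<lambda>h. f' h / f x - g' h / g x)) (at x)"
proof -
  have "((\<lambda>y. ln \<bar>f y / g y\<bar>) has_derivative
      (\<lambda>h. (f' h * g x - f x * g' h) / (g x * g x) * (1 / (f x / g x)))) (at x)"
    by (rule DERIV_compose_FDERIV[OF DERIV_ln_abs has_derivative_divide'[OF f g]])
      (use assms in simp_all)
  then show ?thesis
    by (rule has_derivative_eq_rhs) (use assms in \<open>auto simp: fun_eq_iff field_simps\<close>)
qed

lemma gdot_grad:
  assumes "\<forall>w. w \<noteq> 0 \<longrightarrow> 0 < w \<bullet> (G x *v w)" and "f differentiable (at x)"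
  shows "gdot G x u (grad G f x) = frechet_derivative f (at x) u"
proof -
  have "linear (frechet_derivative f (at x))"
    using assms(2) frechet_derivative_works has_derivative_linear by blast
  then show ?thesis
    unfolding gdot_def grad_def pd_def
      matrix_vector_mult_matrix_inv[OF posdef_matrix_invertible[OF assms(1)]]
    by (rule linear_real_eq_inner[symmetric])
qed

lemma inner_cross3_expansion:
  fixes w c a b d :: "real^3"
  shows "(d \<bullet> cross3 a b) * (w \<bullet> c)
       = (w \<bullet> a) * (c \<bullet> cross3 b d) + (w \<bullet> b) * (c \<bullet> cross3 d a) + (w \<bullet> d) * (c \<bullet> cross3 a b)"
  by (simp add: cross3_def inner_vec_def sum_3 algebra_simps)

lemma curl_inner_cross3:
  assumes "(flat G J has_derivative D) (at x)" and "det (G x) \<noteq> 0"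
  shows "(sqrt (det (G x)) *\<^sub>R curl G J x) \<bullet> cross3 X Y = D X \<bullet> Y - D Y \<bullet> X"
proof -
  have "linear D" using assms(1) has_derivative_linear by blast
  then show ?thesis
    using assms frechet_derivative_at[OF assms(1)]
      linear_axis_expansion[of D X] linear_axis_expansion[of D Y]
    by (simp add: curl_def pd_def cross3_def inner_vec_def sum_3 algebra_simps)
qed

lemma cartan_formula:
  assumes \<omega>: "(\<omega> has_derivative D\<omega>) (at x)"
    and Y: "(Y has_derivative DY) (at x)" and Z: "(Z has_derivative DZ) (at x)"
    and \<omega>Y: "((\<lambda>y. \<omega> y \<bullet> Y y) has_derivative D\<omega>Y) (at x)"
    and \<omega>Z: "((\<lambda>y. \<omega> y \<bullet> Z y) has_derivative D\<omega>Z) (at x)"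
  shows "D\<omega> (Y x) \<bullet> Z x - D\<omega> (Z x) \<bullet> Y x = D\<omega>Z (Y x) - D\<omega>Y (Z x) - \<omega> x \<bullet> lie Y Z x"
proof -
  have "D\<omega>Y = (\<lambda>h. \<omega> x \<bullet> DY h + D\<omega> h \<bullet> Y x)"
    using has_derivative_unique[OF \<omega>Y bounded_bilinear.FDERIV[OF bounded_bilinear_inner \<omega> Y]] .
  moreover have "D\<omega>Z = (\<lambda>h. \<omega> x \<bullet> DZ h + D\<omega> h \<bullet> Z x)"
    using has_derivative_unique[OF \<omega>Z bounded_bilinear.FDERIV[OF bounded_bilinear_inner \<omega> Z]] .
  moreover have "lie Y Z x = DZ (Y x) - DY (Z x)"
    unfolding lie_def frechet_derivative_at[OF Y, symmetric] frechet_derivative_at[OF Z, symmetric] ..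
  ultimately show ?thesis
    by (simp add: inner_diff_right inner_commute)
qed

(* flat G J is the 1-form \<omega> dual to J; the right-hand side is (\<omega> \<and> d\<omega>)(e1, e2, e3). *)
lemma helicity_frame_expansion:
  assumes sym: "transpose (G x) = G x" and pos: "\<forall>w. w \<noteq> 0 \<longrightarrow> 0 < w \<bullet> (G x *v w)"
    and D: "(flat G J has_derivative D) (at x)"
    and e3: "e3 = gcross G x e1 e2" and unit: "gdot G x e3 e3 = 1"
  shows "gdot G x (J x) (curl G J x)
       = (flat G J x \<bullet> e1) * (D e2 \<bullet> e3 - D e3 \<bullet> e2)
       + (flat G J x \<bullet> e2) * (D e3 \<bullet> e1 - D e1 \<bullet> e3)
       + (flat G J x \<bullet> e3) * (D e1 \<bullet> e2 - D e2 \<bullet> e1)"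
proof -
  let ?s = "sqrt (det (G x))"
  have inv: "invertible (G x)" using posdef_matrix_invertible[OF pos] .
  then have det: "det (G x) \<noteq> 0" using invertible_det_nz by blast
  have "G x *v e3 = ?s *\<^sub>R cross3 e1 e2"
    using e3 matrix_vector_mult_matrix_inv[OF inv] by (simp add: gcross_def matrix_vector_mult_scaleR)
  with unit have vol: "(e3 \<bullet> cross3 e1 e2) * ?s = 1"
    by (simp add: gdot_def mult.commute)
  have "gdot G x (J x) (curl G J x) = flat G J x \<bullet> curl G J x"
    using symmetric_matrix_inner_commute[OF sym] by (simp add: gdot_def flat_def inner_commute)
  also have "\<dots> = (e3 \<bullet> cross3 e1 e2) * (flat G J x \<bullet> (?s *\<^sub>R curl G J x))"
    by (simp add: vol mult.assoc[symmetric])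
  also have "\<dots> = (flat G J x \<bullet> e1) * (D e2 \<bullet> e3 - D e3 \<bullet> e2)
       + (flat G J x \<bullet> e2) * (D e3 \<bullet> e1 - D e1 \<bullet> e3)
       + (flat G J x \<bullet> e3) * (D e1 \<bullet> e2 - D e2 \<bullet> e1)"
    by (simp only: inner_cross3_expansion curl_inner_cross3[OF D det])
  finally show ?thesis .
qed

lemma riccati_pair_identity:
  fixes a1 a2 m1 m2 A1 A2 M1 M2 c312 c313 c122 c123 :: real
  assumes "M1 = - c312 - m1 * (c313 + c122) - m1\<^sup>2 * c123"
    and "M2 = - c312 - m2 * (c313 + c122) - m2\<^sup>2 * c123"
  shows "(a1 + a2) * (- (a1 * M1 + A1 * m1 + (a2 * M2 + A2 * m2))
            - c312 * (a1 + a2) - c313 * (a1 * m1 + a2 * m2))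
       + (a1 * m1 + a2 * m2) * (A1 + A2 - c122 * (a1 + a2) - c123 * (a1 * m1 + a2 * m2))
       = (m2 - m1) * (a2 * A1 - a1 * A2 - a1 * a2 * c123 * (m1 - m2))"
  unfolding assms by algebra

locale orthonormal_frame =
  fixes U :: "(real^3) set"
    and G :: "real^3 \<Rightarrow> real^3^3"
    and e :: "nat \<Rightarrow> real^3 \<Rightarrow> real^3"
    and C :: "nat \<Rightarrow> nat \<Rightarrow> nat \<Rightarrow> real^3 \<Rightarrow> real"
  assumes open_domain: "open U"
    and metric: "riem_metric G U"
    and frame_differentiable: "\<forall>i\<in>{1,2,3}. \<forall>x\<in>U. e i differentiable (at x)"
    and orthonormal: "\<forall>i\<in>{1,2,3}. \<forall>j\<in>{1,2,3}. \<forall>x\<in>U.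
                 gdot G x (e i x) (e j x) = (if i = j then 1 else 0)"
    and oriented: "\<forall>x\<in>U. e 3 x = gcross G x (e 1 x) (e 2 x)"
    and structure_functions: "\<forall>i\<in>{1,2,3}. \<forall>j\<in>{1,2,3}. \<forall>x\<in>U.
              lie (e i) (e j) x = (\<Sum>k\<in>{1,2,3}. C i j k x *\<^sub>R e k x)"
begin

lemma metric_symmetric: "x \<in> U \<Longrightarrow> transpose (G x) = G x"
  and metric_posdef: "x \<in> U \<Longrightarrow> \<forall>w. w \<noteq> 0 \<longrightarrow> 0 < w \<bullet> (G x *v w)"
  and metric_differentiable: "x \<in> U \<Longrightarrow> G differentiable (at x)"
  using metric unfolding riem_metric_def by blast+

lemma helicity_in_frame:
  assumes x: "x \<in> U" and J: "J differentiable (at x)"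
    and J1: "\<forall>y\<in>U. gdot G y (e 1 y) (J y) = 0"
    and J2: "((\<lambda>y. gdot G y (e 2 y) (J y)) has_derivative D2) (at x)"
    and J3: "((\<lambda>y. gdot G y (e 3 y) (J y)) has_derivative D3) (at x)"
  defines "b2 \<equiv> gdot G x (e 2 x) (J x)" and "b3 \<equiv> gdot G x (e 3 x) (J x)"
  shows "gdot G x (J x) (curl G J x)
       = b2 * (- D3 (e 1 x) - C 3 1 2 x * b2 - C 3 1 3 x * b3)
       + b3 * (D2 (e 1 x) - C 1 2 2 x * b2 - C 1 2 3 x * b3)"
proof -
  define \<omega> where "\<omega> = flat G J"
  have \<omega>e: "\<omega> y \<bullet> e i y = gdot G y (e i y) (J y)" for i y
    by (simp add: \<omega>_def flat_def gdot_def inner_commute)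
  obtain D\<omega> where D\<omega>: "(\<omega> has_derivative D\<omega>) (at x)"
    using J metric_differentiable[OF x]
      bounded_bilinear.FDERIV[OF bounded_bilinear_matrix_vector_mult, of G _ x UNIV J]
    unfolding \<omega>_def flat_def differentiable_def by blast
  have De: "(e i has_derivative frechet_derivative (e i) (at x)) (at x)" if "i \<in> {1,2,3}" for i
    using frame_differentiable that x frechet_derivative_works by blast
  have \<omega>1: "((\<lambda>y. \<omega> y \<bullet> e 1 y) has_derivative (\<lambda>h. 0)) (at x)"
    by (rule has_derivative_transform_within_open[OF has_derivative_const[of 0] open_domain x])
      (use J1 in \<open>simp add: \<omega>e\<close>)
  have lie: "\<omega> x \<bullet> lie (e i) (e j) x = (\<Sum>k\<in>{1,2,3}. C i j k x * (\<omega> x \<bullet> e k x))"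
    if "i \<in> {1,2,3}" "j \<in> {1,2,3}" for i j
  proof -
    have "lie (e i) (e j) x = (\<Sum>k\<in>{1,2,3}. C i j k x *\<^sub>R e k x)"
      using structure_functions that x by blast
    then show ?thesis by (simp add: inner_add_right)
  qed
  have b: "\<omega> x \<bullet> e 1 x = 0" "\<omega> x \<bullet> e 2 x = b2" "\<omega> x \<bullet> e 3 x = b3"
    using J1 x by (simp_all add: \<omega>e b2_def b3_def)
  have \<omega>2: "((\<lambda>y. \<omega> y \<bullet> e 2 y) has_derivative D2) (at x)"
    and \<omega>3: "((\<lambda>y. \<omega> y \<bullet> e 3 y) has_derivative D3) (at x)"
    using J2 J3 by (simp_all add: \<omega>e)
  have "D\<omega> (e 3 x) \<bullet> e 1 x - D\<omega> (e 1 x) \<bullet> e 3 x = - D3 (e 1 x) - C 3 1 2 x * b2 - C 3 1 3 x * b3"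
    using cartan_formula[OF D\<omega> De De \<omega>3 \<omega>1] lie[of 3 1] b by simp
  moreover have "D\<omega> (e 1 x) \<bullet> e 2 x - D\<omega> (e 2 x) \<bullet> e 1 x = D2 (e 1 x) - C 1 2 2 x * b2 - C 1 2 3 x * b3"
    using cartan_formula[OF D\<omega> De De \<omega>1 \<omega>2] lie[of 1 2] b by simp
  moreover have "gdot G x (J x) (curl G J x)
      = b2 * (D\<omega> (e 3 x) \<bullet> e 1 x - D\<omega> (e 1 x) \<bullet> e 3 x) + b3 * (D\<omega> (e 1 x) \<bullet> e 2 x - D\<omega> (e 2 x) \<bullet> e 1 x)"
  proof -
    have "e 3 x = gcross G x (e 1 x) (e 2 x)" and "gdot G x (e 3 x) (e 3 x) = 1"
      using oriented orthonormal x by auto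
    with helicity_frame_expansion[OF metric_symmetric[OF x] metric_posdef[OF x] D\<omega>[unfolded \<omega>_def]]
    show ?thesis using b unfolding \<omega>_def by simp
  qed
  ultimately show ?thesis by simp
qed

lemma helicity_of_sum:
  assumes x: "x \<in> U"
    and \<alpha>1: "\<alpha>1 differentiable (at x)" and \<alpha>2: "\<alpha>2 differentiable (at x)"
    and \<mu>1: "\<mu>1 differentiable (at x)" and \<mu>2: "\<mu>2 differentiable (at x)"
    and riccati1: "gdot G x (e 1 x) (grad G \<mu>1 x)
                  = - C 3 1 2 x - \<mu>1 x * (C 3 1 3 x + C 1 2 2 x) - (\<mu>1 x)\<^sup>2 * C 1 2 3 x"
    and riccati2: "gdot G x (e 1 x) (grad G \<mu>2 x)
                  = - C 3 1 2 x - \<mu>2 x * (C 3 1 3 x + C 1 2 2 x) - (\<mu>2 x)\<^sup>2 * C 1 2 3 x"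
    and nonzero: "\<alpha>1 x \<noteq> 0" "\<alpha>2 x \<noteq> 0"
  defines "J \<equiv> \<lambda>y. \<alpha>1 y *\<^sub>R (e 2 y + \<mu>1 y *\<^sub>R e 3 y) + \<alpha>2 y *\<^sub>R (e 2 y + \<mu>2 y *\<^sub>R e 3 y)"
  shows "gdot G x (J x) (curl G J x)
       = (\<mu>2 x - \<mu>1 x) * \<alpha>1 x * \<alpha>2 x
         * (gdot G x (e 1 x) (grad G (\<lambda>y. ln \<bar>\<alpha>1 y / \<alpha>2 y\<bar>) x) - C 1 2 3 x * (\<mu>1 x - \<mu>2 x))"
proof -
  obtain A1 A2 M1 M2 where A1: "(\<alpha>1 has_derivative A1) (at x)" and A2: "(\<alpha>2 has_derivative A2) (at x)"
    and M1: "(\<mu>1 has_derivative M1) (at x)" and M2: "(\<mu>2 has_derivative M2) (at x)"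
    using \<alpha>1 \<alpha>2 \<mu>1 \<mu>2 unfolding differentiable_def by blast
  have J1: "gdot G y (e 1 y) (J y) = 0"
    and J2: "gdot G y (e 2 y) (J y) = \<alpha>1 y + \<alpha>2 y"
    and J3: "gdot G y (e 3 y) (J y) = \<alpha>1 y * \<mu>1 y + \<alpha>2 y * \<mu>2 y" if "y \<in> U" for y
    using orthonormal that
    by (auto simp: J_def gdot_def matrix_vector_right_distrib matrix_vector_mult_scaleR
        inner_add_right algebra_simps)
  have "J differentiable (at x)"
    unfolding J_def using \<alpha>1 \<alpha>2 \<mu>1 \<mu>2 frame_differentiable x by (auto intro!: derivative_intros)
  moreover have "((\<lambda>y. gdot G y (e 2 y) (J y)) has_derivative (\<lambda>h. A1 h + A2 h)) (at x)"
    by (rule has_derivative_transform_within_open[OF has_derivative_add[OF A1 A2] open_domain x])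
      (simp add: J2)
  moreover have "((\<lambda>y. gdot G y (e 3 y) (J y)) has_derivative
      (\<lambda>h. \<alpha>1 x * M1 h + A1 h * \<mu>1 x + (\<alpha>2 x * M2 h + A2 h * \<mu>2 x))) (at x)"
    by (rule has_derivative_transform_within_open[OF
          has_derivative_add[OF has_derivative_mult[OF A1 M1] has_derivative_mult[OF A2 M2]] open_domain x])
      (simp add: J3)
  ultimately have frame: "gdot G x (J x) (curl G J x)
      = (\<alpha>1 x + \<alpha>2 x) * (- (\<alpha>1 x * M1 (e 1 x) + A1 (e 1 x) * \<mu>1 x + (\<alpha>2 x * M2 (e 1 x) + A2 (e 1 x) * \<mu>2 x))
          - C 3 1 2 x * (\<alpha>1 x + \<alpha>2 x) - C 3 1 3 x * (\<alpha>1 x * \<mu>1 x + \<alpha>2 x * \<mu>2 x))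
      + (\<alpha>1 x * \<mu>1 x + \<alpha>2 x * \<mu>2 x) * (A1 (e 1 x) + A2 (e 1 x)
          - C 1 2 2 x * (\<alpha>1 x + \<alpha>2 x) - C 1 2 3 x * (\<alpha>1 x * \<mu>1 x + \<alpha>2 x * \<mu>2 x))"
    using helicity_in_frame[OF x] J1 x by (simp add: J2 J3)
  have "M1 (e 1 x) = - C 3 1 2 x - \<mu>1 x * (C 3 1 3 x + C 1 2 2 x) - (\<mu>1 x)\<^sup>2 * C 1 2 3 x"
    using riccati1 gdot_grad[where G=G and x=x, OF metric_posdef[OF x] \<mu>1] frechet_derivative_at[OF M1] by simp
  moreover have "M2 (e 1 x) = - C 3 1 2 x - \<mu>2 x * (C 3 1 3 x + C 1 2 2 x) - (\<mu>2 x)\<^sup>2 * C 1 2 3 x"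
    using riccati2 gdot_grad[where G=G and x=x, OF metric_posdef[OF x] \<mu>2] frechet_derivative_at[OF M2] by simp
  ultimately have "gdot G x (J x) (curl G J x)
      = (\<mu>2 x - \<mu>1 x) * (\<alpha>2 x * A1 (e 1 x) - \<alpha>1 x * A2 (e 1 x) - \<alpha>1 x * \<alpha>2 x * C 1 2 3 x * (\<mu>1 x - \<mu>2 x))"
    unfolding frame by (rule riccati_pair_identity)
  also have "\<dots> = (\<mu>2 x - \<mu>1 x) * \<alpha>1 x * \<alpha>2 x
      * (A1 (e 1 x) / \<alpha>1 x - A2 (e 1 x) / \<alpha>2 x - C 1 2 3 x * (\<mu>1 x - \<mu>2 x))"
    using nonzero by (simp add: field_simps)
  also have "A1 (e 1 x) / \<alpha>1 x - A2 (e 1 x) / \<alpha>2 x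
      = gdot G x (e 1 x) (grad G (\<lambda>y. ln \<bar>\<alpha>1 y / \<alpha>2 y\<bar>) x)"
  proof -
    note log_derivative = has_derivative_ln_abs_divide[OF A1 A2 nonzero]
    then show ?thesis
      using gdot_grad[where G=G and x=x, OF metric_posdef[OF x] differentiableI[OF log_derivative]]
        frechet_derivative_at[OF log_derivative, symmetric] by simp
  qed
  finally show ?thesis .
qed

end

theorem proposition2:
  fixes U :: "(real^3) set"
    and G :: "real^3 \<Rightarrow> real^3^3"
    and v :: "real^3 \<Rightarrow> real^3"
    and e :: "nat \<Rightarrow> real^3 \<Rightarrow> real^3"
    and C :: "nat \<Rightarrow> nat \<Rightarrow> nat \<Rightarrow> real^3 \<Rightarrow> real"
    and \<mu>1 \<mu>2 \<alpha>1 \<alpha>2 :: "real^3 \<Rightarrow> real"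
  assumes U: "open U"
    and G: "riem_metric G U"
    and v_diff: "\<forall>x\<in>U. v differentiable (at x)"
    and v_nz: "\<forall>x\<in>U. v x \<noteq> 0"
    and e1: "\<forall>x\<in>U. e 1 x = (1 / gnorm G x (v x)) *\<^sub>R v x"
    and e_diff: "\<forall>i\<in>{1,2,3}. \<forall>x\<in>U. e i differentiable (at x)"
    and e_on: "\<forall>i\<in>{1,2,3}. \<forall>j\<in>{1,2,3}. \<forall>x\<in>U.
                 gdot G x (e i x) (e j x) = (if i = j then 1 else 0)"
    and e3: "\<forall>x\<in>U. e 3 x = gcross G x (e 1 x) (e 2 x)"
    and C: "\<forall>i\<in>{1,2,3}. \<forall>j\<in>{1,2,3}. \<forall>x\<in>U.
              lie (e i) (e j) x = (\<Sum>k\<in>{1,2,3}. C i j k x *\<^sub>R e k x)"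
    and \<mu>_diff: "\<forall>x\<in>U. \<mu>1 differentiable (at x) \<and> \<mu>2 differentiable (at x)"
    and \<mu>1_sol: "\<forall>x\<in>U. gdot G x (e 1 x) (grad G \<mu>1 x)
                  = - C 3 1 2 x - \<mu>1 x * (C 3 1 3 x + C 1 2 2 x) - (\<mu>1 x)\<^sup>2 * C 1 2 3 x"
    and \<mu>2_sol: "\<forall>x\<in>U. gdot G x (e 1 x) (grad G \<mu>2 x)
                  = - C 3 1 2 x - \<mu>2 x * (C 3 1 3 x + C 1 2 2 x) - (\<mu>2 x)\<^sup>2 * C 1 2 3 x"
    and \<mu>_neq: "\<forall>x\<in>U. \<mu>1 x \<noteq> \<mu>2 x"
    and \<alpha>_diff: "\<forall>x\<in>U. \<alpha>1 differentiable (at x) \<and> \<alpha>2 differentiable (at x)"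
    and \<alpha>_nz: "\<forall>x\<in>U. \<alpha>1 x \<noteq> 0 \<and> \<alpha>2 x \<noteq> 0"
  shows "poisson G U (\<lambda>x. \<alpha>1 x *\<^sub>R (e 2 x + \<mu>1 x *\<^sub>R e 3 x) + \<alpha>2 x *\<^sub>R (e 2 x + \<mu>2 x *\<^sub>R e 3 x))
         \<longleftrightarrow> (\<forall>x\<in>U. gdot G x (e 1 x) (grad G (\<lambda>y. ln \<bar>\<alpha>1 y / \<alpha>2 y\<bar>) x)
                     = C 1 2 3 x * (\<mu>1 x - \<mu>2 x))"
proof -
  interpret orthonormal_frame U G e C
    using U G e_diff e_on e3 C by unfold_locales
  define J where "J = (\<lambda>x. \<alpha>1 x *\<^sub>R (e 2 x + \<mu>1 x *\<^sub>R e 3 x) + \<alpha>2 x *\<^sub>R (e 2 x + \<mu>2 x *\<^sub>R e 3 x))"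
  define L where "L = (\<lambda>x. gdot G x (e 1 x) (grad G (\<lambda>y. ln \<bar>\<alpha>1 y / \<alpha>2 y\<bar>) x))"
  have "gdot G x (J x) (curl G J x) = (\<mu>2 x - \<mu>1 x) * \<alpha>1 x * \<alpha>2 x * (L x - C 1 2 3 x * (\<mu>1 x - \<mu>2 x))"
    if "x \<in> U" for x
    unfolding J_def L_def
    by (rule helicity_of_sum) (use that \<alpha>_diff \<mu>_diff \<mu>1_sol \<mu>2_sol \<alpha>_nz in auto)
  then have "gdot G x (J x) (curl G J x) = 0 \<longleftrightarrow> L x = C 1 2 3 x * (\<mu>1 x - \<mu>2 x)" if "x \<in> U" for x
    using that \<mu>_neq \<alpha>_nz by auto
  then show ?thesis
    unfolding poisson_def J_def L_def by blast
qed

end
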